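(* Let $\mathcal{A}$ be a nonnegative combinatorially symmetric weakly irreducible tensor of order $m$ and dimension $n$ which is spectral $\ell$-symmetric, and let $j\in\{0,1,\ldots,\ell-1\}$. Let $y$ be an eigenvector of $\mathcal{A}$ for the eigenvalue $\lambda_j=\rho(\mathcal{A})e^{\mathrm{i}2\pi j/\ell}$ with $y_1=1$, and write $y_i/|y_i|=e^{\mathrm{i}\frac{2\pi}{m}\phi_i}$ with $\phi_i\in\{0,1,\dots,m-1\}$, $\phi=(\phi_1,\dots,\phi_n)\in\mathbb{Z}_m^n$. Then $B_{\mathcal{A}}\phi=\frac{mj}{\ell}\mathbb{1}$ over $\mathbb{Z}_m$, where $\mathbb{1}$ is the all-one vector.
   Context: Tensors: order $m$, dimension $n$, entries $a_{i_1\cdots i_m}$. Eigenvalue/eigenvector: $\mathcal{A}x^{m-1}=\lambda x^{[m-1]}$, $x\ne0$, with $(\mathcal{A}x^{m-1})_i=\sum a_{ii_2\cdots i_m}x_{i_2}\cdots x_{i_m}$, $x^{[m-1]}=(x_i^{m-1})$. $\rho(\mathcal{A})$: largest modulus of eigenvalues (roots of the resultant-based characteristic polynomial $\det(\lambda\mathcal{I}-\mathcal{A})$, whose multiset of roots is $\mathrm{Spec}(\mathcal{A})$). Spectral $\ell$-symmetric: $\mathrm{Spec}(\mathcal{A})=e^{\mathrm{i}2\pi/\ell}\mathrm{Spec}(\mathcal{A})$. Weakly irreducible: the digraph on $[n]$ with arc $(i,j)$ whenever some $a_{ii_2\cdots i_m}\ne0$ with $j\in\{i_2,\dots,i_m\}$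 is strongly connected. Combinatorially symmetric: whether $a_{i_1\cdots i_m}\ne0$ is invariant under permuting indices. Known facts used to make the statement meaningful: under these hypotheses $\ell\mid m$, every such eigenvector $y$ has no zero entries, and when $y_1=1$ every $y_i/|y_i|$ is an $m$-th root of unity. Incidence matrix: $E(\mathcal{A})=\{(i_1,\dots,i_m)\in[n]^m: a_{i_1\cdots i_m}\ne0,\ i_1\le\cdots\le i_m\}$; $B_{\mathcal{A}}=(b_{e,j})$ is the $|E(\mathcal{A})|\times n$ matrix with $b_{e,j}=|\{k\in[m]: i_k=j\}|$ for $e=(i_1,\dots,i_m)$, viewed over $\mathbb{Z}_m$. *)

theory Defs
  imports "HOL-Analysis.Analysis" "HOL-Library.Multiset"
begin

text \<open>A tensor of order m and dimension n is a function on index lists; only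
lists of length m with entries in {0..<n} are meaningful (indices are 0-based,
so the paper's index 1 is our index 0).\<close>

type_synonym tensor = "nat list \<Rightarrow> real"

definition idx :: "nat \<Rightarrow> nat \<Rightarrow> nat list set" where
  "idx k n = {is. length is = k \<and> (\<forall>t\<in>set is. t < n)}"

definition nonneg_tensor :: "nat \<Rightarrow> nat \<Rightarrow> tensor \<Rightarrow> bool" where
  "nonneg_tensor m n A \<longleftrightarrow> (\<forall>is\<in>idx m n. A is \<ge> 0)"

definition tmult :: "nat \<Rightarrow> nat \<Rightarrow> tensor \<Rightarrow> (nat \<Rightarrow> complex) \<Rightarrow> nat \<Rightarrow> complex" where
  "tmult m n A x i = (\<Sum>is\<in>idx (m - 1) n. complex_of_real (A (i # is)) * (\<Prod>t<m - 1. x (is ! t)))"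

definition is_eigenpair :: "nat \<Rightarrow> nat \<Rightarrow> tensor \<Rightarrow> complex \<Rightarrow> (nat \<Rightarrow> complex) \<Rightarrow> bool" where
  "is_eigenpair m n A lam x \<longleftrightarrow>
     (\<exists>i<n. x i \<noteq> 0) \<and> (\<forall>i<n. tmult m n A x i = lam * x i ^ (m - 1))"

definition tensor_eigenvalues :: "nat \<Rightarrow> nat \<Rightarrow> tensor \<Rightarrow> complex set" where
  "tensor_eigenvalues m n A = {lam. \<exists>x. is_eigenpair m n A lam x}"

definition spectral_radius :: "nat \<Rightarrow> nat \<Rightarrow> tensor \<Rightarrow> real" where
  "spectral_radius m n A = Sup (cmod ` tensor_eigenvalues m n A)"

definition spectral_sym :: "nat \<Rightarrow> nat \<Rightarrow> tensor \<Rightarrow> nat \<Rightarrow> bool" where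
  "spectral_sym m n A l \<longleftrightarrow>
     tensor_eigenvalues m n A = (\<lambda>z. cis (2 * pi / real l) * z) ` tensor_eigenvalues m n A"

definition arcs :: "nat \<Rightarrow> nat \<Rightarrow> tensor \<Rightarrow> (nat \<times> nat) set" where
  "arcs m n A = {(i, j). i < n \<and> j < n \<and>
      (\<exists>is\<in>idx (m - 1) n. A (i # is) \<noteq> 0 \<and> j \<in> set is)}"

definition weakly_irreducible :: "nat \<Rightarrow> nat \<Rightarrow> tensor \<Rightarrow> bool" where
  "weakly_irreducible m n A \<longleftrightarrow> (\<forall>i<n. \<forall>j<n. (i, j) \<in> (arcs m n A)\<^sup>*)"

definition comb_symmetric :: "nat \<Rightarrow> nat \<Rightarrow> tensor \<Rightarrow> bool" where
  "comb_symmetric m n A \<longleftrightarrow>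
     (\<forall>is\<in>idx m n. \<forall>js\<in>idx m n. mset is = mset js \<longrightarrow> (A is \<noteq> 0 \<longleftrightarrow> A js \<noteq> 0))"

definition edges :: "nat \<Rightarrow> nat \<Rightarrow> tensor \<Rightarrow> nat list set" where
  "edges m n A = {e\<in>idx m n. A e \<noteq> 0 \<and> sorted e}"

definition incid :: "nat \<Rightarrow> nat list \<Rightarrow> nat \<Rightarrow> nat" where
  "incid m e j = card {k. k < m \<and> e ! k = j}"

end

theory Submission
  imports Defs "HOL-Homology.Brouwer_Degree"
begin

text \<open>Let \<rho> be the spectral radius, \<lambda> = \<rho> e^{i 2 \<pi> j / l} and z = |y|. The triangle
  inequality in the eigen-equation gives \<rho> z^[m-1] \<le> A z^{m-1} componentwise. If it were
  strict in one row, weak irreducibility would let us perturb z into a positive w with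
  A w^{m-1} > \<rho> w^[m-1] in every row, and a fixed-point argument on the nonnegative part of
  the unit sphere (a stand-in for Brouwer's theorem) would produce a nonnegative eigenvector
  with eigenvalue larger than \<rho>. So every row is an equality case of the triangle inequality,
  and all nonzero terms of row i share the phase of \<lambda> y_i^{m-1}. For an edge
  e = (i, i_2, ..., i_m) this reads sgn y_{i_2} ... sgn y_{i_m} = sgn \<lambda> (sgn y_i)^{m-1};
  multiplying by sgn y_i, an m-th root of unity, gives e^{i 2 \<pi> (\<Sigma>_k \<phi>_{e_k}) / m} = e^{i 2 \<pi> j / l},
  which is the claimed congruence.\<close>

section \<open>A fixed-point property of the nonnegative unit sphere\<close>

definition std_sphere :: "nat \<Rightarrow> (nat \<Rightarrow> real) set" where
  "std_sphere n = {x. (\<Sum>i<n. (x i)\<^sup>2) = 1 \<and> (\<forall>i\<ge>n. x i = 0)}"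

lemma nsphere_eq_std_sphere:
  assumes "n \<ge> 1"
  shows "nsphere (n - 1) = top_of_set (std_sphere n)"
proof -
  have "{..n - 1} = {..<n}" and "\<And>i. n - 1 < i \<longleftrightarrow> n \<le> i"
    using assms by auto
  then show ?thesis
    unfolding nsphere std_sphere_def euclidean_product_topology by simp
qed

lemma not_contractible_std_sphere: "n \<ge> 1 \<Longrightarrow> \<not> contractible (std_sphere n)"
  by (metis contractible_space_top_of_set nsphere_eq_std_sphere non_contractible_space_nsphere)

lemma std_sphere_abs_le_1:
  assumes "x \<in> std_sphere n"
  shows "\<bar>x i\<bar> \<le> 1"
proof (cases "i < n")
  case True
  then have "(x i)\<^sup>2 \<le> (\<Sum>i<n. (x i)\<^sup>2)"
    by (intro member_le_sum) auto
  with assms show ?thesis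
    unfolding std_sphere_def by (simp add: abs_square_le_1)
qed (use assms in \<open>simp add: std_sphere_def\<close>)

lemma std_sphere_nonzero: "x \<in> std_sphere n \<Longrightarrow> \<exists>i<n. x i \<noteq> 0"
  unfolding std_sphere_def by (metis (mono_tags, lifting) mem_Collect_eq sum.neutral zero_neq_one
      zero_power2 lessThan_iff)

lemma continuous_on_coordinate [continuous_intros]: "continuous_on S (\<lambda>x::nat\<Rightarrow>real. x i)"
  by (rule continuous_on_subset[OF continuous_on_product_coordinates]) simp

lemma compact_std_sphere: "compact (std_sphere n)"
proof -
  define B where "B = Pi\<^sub>E UNIV (\<lambda>i. if i < n then {-1..1} else {0::real})"
  have "compactin (product_topology (\<lambda>i. euclideanreal) UNIV) B"
    unfolding B_def compactin_PiE by auto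
  then have "compact B"
    by (simp add: euclidean_product_topology)
  moreover have "closed (std_sphere n)"
  proof -
    have "std_sphere n = {x. (\<Sum>i<n. (x i)\<^sup>2) = 1} \<inter> (\<Inter>i\<in>{n..}. {x. x i = 0})"
      unfolding std_sphere_def by auto
    moreover have "closed {x::nat\<Rightarrow>real. (\<Sum>i<n. (x i)\<^sup>2) = 1}"
      by (intro closed_Collect_eq continuous_intros)
    moreover have "closed {x::nat\<Rightarrow>real. x i = 0}" for i
      by (intro closed_Collect_eq continuous_intros)
    ultimately show ?thesis
      by (metis closed_Int closed_INT)
  qed
  moreover have "std_sphere n \<subseteq> B"
    using std_sphere_abs_le_1 unfolding B_def
    by (fastforce simp: PiE_UNIV_domain abs_le_iff std_sphere_def)
  ultimately show ?thesis
    by (metis compact_Int_closed inf.absorb_iff2)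
qed

definition std_sphere_nonneg :: "nat \<Rightarrow> (nat \<Rightarrow> real) set" where
  "std_sphere_nonneg n = std_sphere n \<inter> {x. \<forall>i. x i \<ge> 0}"

lemma compact_std_sphere_nonneg: "compact (std_sphere_nonneg n)"
proof -
  have "closed {x::nat\<Rightarrow>real. 0 \<le> x i}" for i
    by (intro closed_Collect_le continuous_intros)
  then have "closed (\<Inter>i. {x::nat\<Rightarrow>real. 0 \<le> x i})"
    by blast
  moreover have "{x::nat\<Rightarrow>real. \<forall>i. x i \<ge> 0} = (\<Inter>i. {x. 0 \<le> x i})"
    by auto
  ultimately show ?thesis
    unfolding std_sphere_nonneg_def using compact_std_sphere by (simp add: compact_Int_closed)
qed

definition sphere_normalize :: "nat \<Rightarrow> (nat \<Rightarrow> real) \<Rightarrow> nat \<Rightarrow> real" where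
  "sphere_normalize n v = (\<lambda>i. if i < n then v i / sqrt (\<Sum>j<n. (v j)\<^sup>2) else 0)"

lemma sphere_normalize_in_std_sphere:
  assumes "(\<Sum>j<n. (v j)\<^sup>2) \<noteq> 0"
  shows "sphere_normalize n v \<in> std_sphere n"
proof -
  let ?s = "\<Sum>j<n. (v j)\<^sup>2"
  have pos: "?s > 0"
    using assms by (metis less_eq_real_def sum_nonneg zero_le_power2)
  have "(\<Sum>i<n. (sphere_normalize n v i)\<^sup>2) = (\<Sum>i<n. (v i)\<^sup>2 / ?s)"
    using pos by (intro sum.cong) (auto simp: sphere_normalize_def power_divide)
  also have "\<dots> = 1"
    using pos by (simp add: sum_divide_distrib[symmetric])
  finally show ?thesis
    unfolding std_sphere_def by (auto simp: sphere_normalize_def)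
qed

lemma sphere_normalize_id: "x \<in> std_sphere n \<Longrightarrow> sphere_normalize n x = x"
  unfolding std_sphere_def sphere_normalize_def by (auto simp: fun_eq_iff)

lemma continuous_on_sphere_normalize:
  assumes "continuous_on S g" and "\<And>z. z \<in> S \<Longrightarrow> (\<Sum>j<n. (g z j)\<^sup>2) \<noteq> 0"
  shows "continuous_on S (\<lambda>z. sphere_normalize n (g z))"
  unfolding sphere_normalize_def
proof (rule continuous_on_coordinatewise_then_product)
  fix i
  have "continuous_on S (\<lambda>z. g z j)" for j
    by (rule continuous_on_product_then_coordinatewise[OF assms(1)])
  then show "continuous_on S (\<lambda>z. if i < n then g z i / sqrt (\<Sum>j<n. (g z j)\<^sup>2) else 0)"
    using assms(2) by (cases "i < n") (auto intro!: continuous_intros)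
qed

lemma homotopic_sphere_normalize:
  fixes g :: "real \<times> 'a::topological_space \<Rightarrow> nat \<Rightarrow> real"
  assumes "continuous_on ({0..1} \<times> S) g"
    and "\<And>z. z \<in> {0..1} \<times> S \<Longrightarrow> (\<Sum>j<n. (g z j)\<^sup>2) \<noteq> 0"
  shows "homotopic_with_canon (\<lambda>_. True) S (std_sphere n)
           (\<lambda>x. sphere_normalize n (g (0, x))) (\<lambda>x. sphere_normalize n (g (1, x)))"
proof -
  let ?h = "\<lambda>z. sphere_normalize n (g z)"
  have "continuous_on ({0..1} \<times> S) ?h"
    using assms by (rule continuous_on_sphere_normalize)
  moreover have "?h ` ({0..1} \<times> S) \<subseteq> std_sphere n"
    using assms(2) sphere_normalize_in_std_sphere by blast
  ultimately show ?thesis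
    by (subst homotopic_with, simp, intro exI[of _ ?h])
       (auto simp: subtopology_Times[symmetric] continuous_map_subtopology_eu Pi_iff image_subset_iff)
qed

lemma std_sphere_segment_to_antipode_nonzero:
  assumes x: "x \<in> std_sphere n" and y: "y \<in> std_sphere n" and "x \<noteq> y"
  shows "(\<Sum>j<n. ((1 - t) * x j - t * y j)\<^sup>2) \<noteq> 0"
proof
  assume "(\<Sum>j<n. ((1 - t) * x j - t * y j)\<^sup>2) = 0"
  then have eq: "(1 - t) * x j = t * y j" if "j < n" for j
    using that by (simp add: sum_nonneg_eq_0_iff)
  have "(1 - t)\<^sup>2 = (\<Sum>j<n. ((1 - t) * x j)\<^sup>2)"
    using x by (simp add: std_sphere_def power_mult_distrib sum_distrib_left[symmetric])
  also have "\<dots> = (\<Sum>j<n. (t * y j)\<^sup>2)"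
    using eq by simp
  also have "\<dots> = t\<^sup>2"
    using y by (simp add: std_sphere_def power_mult_distrib sum_distrib_left[symmetric])
  finally have "t = 1/2"
    by (simp add: power2_eq_square algebra_simps)
  have "x j = y j" if "j < n" for j
    using eq[OF that] unfolding \<open>t = 1/2\<close> by simp
  moreover have "x j = y j" if "\<not> j < n" for j
    using x y that by (simp add: std_sphere_def)
  ultimately have "x = y"
    by (metis ext)
  with \<open>x \<noteq> y\<close> show False ..
qed

lemma std_sphere_nonneg_segment_nonzero:
  assumes "n \<ge> 1" and y: "y \<in> std_sphere n" and "\<And>j. j < n \<Longrightarrow> y j \<ge> 0"
    and "0 \<le> t" and "t \<le> 1"
  shows "(\<Sum>j<n. (- (1 - t) * y j - t)\<^sup>2) \<noteq> 0"
proof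
  assume "(\<Sum>j<n. (- (1 - t) * y j - t)\<^sup>2) = 0"
  then have eq: "- (1 - t) * y j - t = 0" if "j < n" for j
    using that by (simp add: sum_nonneg_eq_0_iff)
  show False
  proof (cases "t = 0")
    case True
    with eq y show False
      by (simp add: std_sphere_def)
  next
    case False
    have "(1 - t) * y 0 \<ge> 0"
      using assms by simp
    with eq[of 0] \<open>n \<ge> 1\<close> False \<open>0 \<le> t\<close> show False
      by (simp add: algebra_simps)
  qed
qed

lemma continuous_on_snd_coordinate:
  assumes "continuous_on S F"
  shows "continuous_on (T \<times> S) (\<lambda>z. F (snd z) i :: real)"
  by (rule continuous_on_product_then_coordinatewise,
      rule continuous_on_compose2[OF assms continuous_on_snd]) auto

lemma homotopic_id_neg_if_fixpoint_free:
  assumes Fc: "continuous_on (std_sphere n) F" and FS: "F ` std_sphere n \<subseteq> std_sphere n"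
    and nofix: "\<And>x. x \<in> std_sphere n \<Longrightarrow> F x \<noteq> x"
  shows "homotopic_with_canon (\<lambda>_. True) (std_sphere n) (std_sphere n)
           id (\<lambda>x. sphere_normalize n (\<lambda>i. - F x i))"
proof -
  let ?S = "std_sphere n"
  define g where "g z = (\<lambda>i. (1 - fst z) * snd z i - fst z * F (snd z) i)" for z
  have "continuous_on ({0..1} \<times> ?S) (\<lambda>z. snd z i)" for i :: nat
    by (rule continuous_on_product_then_coordinatewise[OF continuous_on_snd[OF continuous_on_id]])
  then have "continuous_on ({0..1} \<times> ?S) g"
    unfolding g_def
    by (intro continuous_on_coordinatewise_then_product continuous_intros continuous_on_snd_coordinate Fc)
  moreover have "(\<Sum>j<n. (g z j)\<^sup>2) \<noteq> 0" if zS: "z \<in> {0..1} \<times> ?S" for z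
  proof -
    obtain t x where z: "z = (t, x)" and x: "x \<in> ?S"
      using zS by (metis mem_Times_iff prod.collapse)
    have "x \<noteq> F x" and "F x \<in> ?S"
      using nofix[OF x] FS x by auto
    then show ?thesis
      unfolding z g_def using x std_sphere_segment_to_antipode_nonzero by simp
  qed
  ultimately have "homotopic_with_canon (\<lambda>_. True) ?S ?S
      (\<lambda>x. sphere_normalize n (g (0, x))) (\<lambda>x. sphere_normalize n (g (1, x)))"
    by (rule homotopic_sphere_normalize)
  then show ?thesis
    by (rule homotopic_with_eq) (auto simp: g_def sphere_normalize_id)
qed

lemma homotopic_neg_const_if_nonneg:
  assumes n: "n \<ge> 1" and Fc: "continuous_on (std_sphere n) F"
    and FS: "F ` std_sphere n \<subseteq> std_sphere n"
    and Fnonneg: "\<And>x i. x \<in> std_sphere n \<Longrightarrow> i < n \<Longrightarrow> F x i \<ge> 0"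
  shows "homotopic_with_canon (\<lambda>_. True) (std_sphere n) (std_sphere n)
           (\<lambda>x. sphere_normalize n (\<lambda>i. - F x i)) (\<lambda>_. sphere_normalize n (\<lambda>_. -1))"
proof -
  let ?S = "std_sphere n"
  define g where "g z = (\<lambda>i. - (1 - fst z) * F (snd z) i - fst z)" for z
  have "continuous_on ({0..1} \<times> ?S) g"
    unfolding g_def
    by (intro continuous_on_coordinatewise_then_product continuous_intros continuous_on_snd_coordinate Fc)
  moreover have "(\<Sum>j<n. (g z j)\<^sup>2) \<noteq> 0" if zS: "z \<in> {0..1} \<times> ?S" for z
  proof -
    obtain t x where z: "z = (t, x)" and t: "0 \<le> t" "t \<le> 1" and x: "x \<in> ?S"
      using zS by (metis atLeastAtMost_iff mem_Times_iff prod.collapse)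
    have "F x \<in> ?S"
      using FS x by blast
    then show ?thesis
      unfolding z g_def using std_sphere_nonneg_segment_nonzero[OF n _ Fnonneg[OF x] t] by simp
  qed
  ultimately have "homotopic_with_canon (\<lambda>_. True) ?S ?S
      (\<lambda>x. sphere_normalize n (g (0, x))) (\<lambda>x. sphere_normalize n (g (1, x)))"
    by (rule homotopic_sphere_normalize)
  then show ?thesis
    by (simp add: g_def)
qed

text \<open>Without a fixed point the segments from x to -F x avoid 0, and since F is nonnegative
  so do the segments from -F x to (-1, ..., -1); hence the sphere would be contractible.\<close>
lemma std_sphere_nonneg_map_has_fixpoint:
  assumes n: "n \<ge> 1" and Fc: "continuous_on (std_sphere n) F"
    and FS: "F ` std_sphere n \<subseteq> std_sphere n"
    and Fnonneg: "\<And>x i. x \<in> std_sphere n \<Longrightarrow> i < n \<Longrightarrow> F x i \<ge> 0"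
  shows "\<exists>x\<in>std_sphere n. F x = x"
proof (rule ccontr)
  assume "\<not> ?thesis"
  then have "homotopic_with_canon (\<lambda>_. True) (std_sphere n) (std_sphere n)
      id (\<lambda>x. sphere_normalize n (\<lambda>i. - F x i))"
    by (intro homotopic_id_neg_if_fixpoint_free[OF Fc FS]) auto
  then have "contractible (std_sphere n)"
    unfolding contractible_def
    using homotopic_with_trans homotopic_neg_const_if_nonneg[OF n Fc FS Fnonneg] by blast
  with not_contractible_std_sphere n show False
    by blast
qed

section \<open>Nonnegative eigenvectors\<close>

definition tensor_apply :: "nat \<Rightarrow> nat \<Rightarrow> tensor \<Rightarrow> (nat \<Rightarrow> real) \<Rightarrow> nat \<Rightarrow> real" where
  "tensor_apply m n A x i = (\<Sum>js\<in>idx (m - 1) n. A (i # js) * (\<Prod>t<m - 1. x (js ! t)))"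

lemma tmult_of_real:
  "tmult m n A (\<lambda>i. of_real (x i)) i = of_real (tensor_apply m n A x i)"
  unfolding tmult_def tensor_apply_def by simp

lemma finite_idx: "finite (idx k n)"
proof -
  have "idx k n = {xs. set xs \<subseteq> {..<n} \<and> length xs = k}"
    unfolding idx_def by auto
  then show ?thesis
    using finite_lists_length_eq[of "{..<n}" k] by simp
qed

lemma nth_in_idx: "js \<in> idx k n \<Longrightarrow> t < k \<Longrightarrow> js ! t < n"
  unfolding idx_def by auto

lemma nonneg_tensor_entry:
  "nonneg_tensor m n A \<Longrightarrow> m \<ge> 1 \<Longrightarrow> i < n \<Longrightarrow> js \<in> idx (m - 1) n \<Longrightarrow> A (i # js) \<ge> 0"
  unfolding nonneg_tensor_def idx_def by auto

lemma continuous_on_tensor_apply [continuous_intros]: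
  assumes "continuous_on S g"
  shows "continuous_on S (\<lambda>z. tensor_apply m n A (g z) i)"
proof -
  have "continuous_on S (\<lambda>z. g z j)" for j
    using assms by (rule continuous_on_product_then_coordinatewise)
  then show ?thesis
    unfolding tensor_apply_def by (intro continuous_intros)
qed

lemma tensor_apply_nonneg:
  assumes "nonneg_tensor m n A" "m \<ge> 1" "i < n" "\<And>j. j < n \<Longrightarrow> x j \<ge> 0"
  shows "tensor_apply m n A x i \<ge> 0"
  unfolding tensor_apply_def using assms
  by (intro sum_nonneg mult_nonneg_nonneg prod_nonneg) (auto simp: nonneg_tensor_entry nth_in_idx)

lemma tensor_apply_mono:
  assumes "nonneg_tensor m n A" "m \<ge> 1" "i < n" "\<And>j. j < n \<Longrightarrow> 0 \<le> x j \<and> x j \<le> x' j"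
  shows "tensor_apply m n A x i \<le> tensor_apply m n A x' i"
  unfolding tensor_apply_def using assms
  by (intro sum_mono mult_left_mono prod_mono) (auto simp: nonneg_tensor_entry nth_in_idx)

lemma tensor_apply_scale:
  "tensor_apply m n A (\<lambda>j. c * x j) i = c ^ (m - 1) * tensor_apply m n A x i"
  unfolding tensor_apply_def by (simp add: prod.distrib sum_distrib_left algebra_simps)

lemma tensor_apply_strict_mono:
  assumes A: "nonneg_tensor m n A" "m \<ge> 1" "i < n"
    and le: "\<And>j. j < n \<Longrightarrow> 0 < x j \<and> x j \<le> x' j"
    and ks: "ks \<in> idx (m - 1) n" "A (i # ks) \<noteq> 0" "b \<in> set ks" and "x b < x' b"
  shows "tensor_apply m n A x i < tensor_apply m n A x' i"
  unfolding tensor_apply_def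
proof (rule sum_strict_mono_ex1[OF finite_idx])
  show "\<forall>js\<in>idx (m - 1) n. A (i # js) * (\<Prod>t<m - 1. x (js ! t)) \<le> A (i # js) * (\<Prod>t<m - 1. x' (js ! t))"
    using A le by (intro ballI mult_left_mono prod_mono) (auto simp: nonneg_tensor_entry nth_in_idx less_imp_le)
  obtain s where s: "s < m - 1" "ks ! s = b"
    using ks unfolding idx_def by (auto simp: in_set_conv_nth)
  have "(\<Prod>t<m - 1. x (ks ! t)) < (\<Prod>t<m - 1. x' (ks ! t))"
  proof (rule prod_mono_strict[of s])
    show "0 \<le> x (ks ! t) \<and> x (ks ! t) \<le> x' (ks ! t)" "0 < x' (ks ! t)" if "t \<in> {..<m - 1}" for t
      using le[of "ks ! t"] nth_in_idx[OF ks(1), of t] that by auto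
  qed (use s \<open>x b < x' b\<close> in auto)
  moreover have "A (i # ks) > 0"
    using nonneg_tensor_entry[OF A ks(1)] ks(2) by simp
  ultimately show "\<exists>js\<in>idx (m - 1) n. A (i # js) * (\<Prod>t<m - 1. x (js ! t)) < A (i # js) * (\<Prod>t<m - 1. x' (js ! t))"
    using ks(1) by (meson mult_strict_left_mono)
qed

text \<open>Collatz--Wielandt comparison: scale w down until it touches x from below.\<close>
lemma collatz_wielandt_less:
  assumes A: "nonneg_tensor m n A" and "m \<ge> 1" and "n \<ge> 1"
    and w: "\<And>i. i < n \<Longrightarrow> w i > 0" "\<And>i. i < n \<Longrightarrow> \<gamma> * w i ^ (m - 1) \<le> tensor_apply m n A w i"
    and x: "\<And>i. i < n \<Longrightarrow> x i > 0" "\<And>i. i < n \<Longrightarrow> tensor_apply m n A x i < \<mu> * x i ^ (m - 1)"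
  shows "\<gamma> < \<mu>"
proof -
  define t where "t = Min ((\<lambda>i. x i / w i) ` {..<n})"
  have fin: "finite ((\<lambda>i. x i / w i) ` {..<n})" "(\<lambda>i. x i / w i) ` {..<n} \<noteq> {}"
    using \<open>n \<ge> 1\<close> by (auto simp: lessThan_empty_iff)
  obtain k where k: "k < n" "t = x k / w k"
    using Min_in[OF fin] unfolding t_def by auto
  have tpos: "t > 0"
    using k w x by simp
  have "t * w j \<le> x j" if "j < n" for j
    using Min_le[OF fin(1), of "x j / w j"] w(1)[OF that] that by (simp add: t_def pos_le_divide_eq)
  then have mono: "tensor_apply m n A (\<lambda>j. t * w j) k \<le> tensor_apply m n A x k"
    using tpos w(1) by (intro tensor_apply_mono[OF A \<open>m \<ge> 1\<close> k(1)]) (simp add: less_imp_le)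
  have "x k = t * w k"
    using k w(1)[OF k(1)] by simp
  then have "\<gamma> * x k ^ (m - 1) = t ^ (m - 1) * (\<gamma> * w k ^ (m - 1))"
    by (simp add: power_mult_distrib)
  also have "\<dots> \<le> t ^ (m - 1) * tensor_apply m n A w k"
    using w(2)[OF k(1)] tpos by (intro mult_left_mono) auto
  also have "\<dots> \<le> tensor_apply m n A x k"
    using mono by (simp add: tensor_apply_scale)
  also have "\<dots> < \<mu> * x k ^ (m - 1)"
    using x(2)[OF k(1)] .
  finally show ?thesis
    using x(1)[OF k(1)] by (simp add: mult_less_cancel_right)
qed

text \<open>Normalized fixed points of this map are the positive solutions of
  A x^{m-1} + \<epsilon> = \<mu> x^[m-1] on the sphere; the perturbation \<epsilon> keeps the map positive, so
  that it can be normalized.\<close>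
definition perturbed_root :: "nat \<Rightarrow> nat \<Rightarrow> tensor \<Rightarrow> real \<Rightarrow> (nat \<Rightarrow> real) \<Rightarrow> nat \<Rightarrow> real" where
  "perturbed_root m n A \<epsilon> x i = root (m - 1) (tensor_apply m n A (\<lambda>j. \<bar>x j\<bar>) i + \<epsilon>)"

lemma perturbed_root_pos:
  assumes "m \<ge> 2" and "nonneg_tensor m n A" and "\<epsilon> > 0" and "i < n"
  shows "perturbed_root m n A \<epsilon> x i > 0"
  using tensor_apply_nonneg[OF assms(2) _ assms(4), of "\<lambda>j. \<bar>x j\<bar>"] assms(1,3)
  unfolding perturbed_root_def by (intro real_root_gt_zero) auto

lemma perturbed_root_sum_squares_pos:
  assumes "m \<ge> 2" and "n \<ge> 1" and "nonneg_tensor m n A" and "\<epsilon> > 0"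
  shows "(\<Sum>j<n. (perturbed_root m n A \<epsilon> x j)\<^sup>2) > 0"
proof -
  have "(perturbed_root m n A \<epsilon> x j)\<^sup>2 > 0" if "j < n" for j
    using perturbed_root_pos[OF assms(1,3,4) that] by (rule zero_less_power)
  with assms(2) show ?thesis
    by (intro sum_pos) (auto simp: lessThan_empty_iff)
qed

lemma perturbed_root_has_normalized_fixpoint:
  assumes m: "m \<ge> 2" and n: "n \<ge> 1" and A: "nonneg_tensor m n A" and "\<epsilon> > 0"
  shows "\<exists>x\<in>std_sphere n. sphere_normalize n (perturbed_root m n A \<epsilon> x) = x"
proof (rule std_sphere_nonneg_map_has_fixpoint[OF n])
  let ?R = "perturbed_root m n A \<epsilon>"
  have sq_pos: "(\<Sum>j<n. (?R x j)\<^sup>2) > 0" for x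
    by (rule perturbed_root_sum_squares_pos[OF m n A \<open>\<epsilon> > 0\<close>])
  have "continuous_on (std_sphere n) (\<lambda>x j. \<bar>x j\<bar>)"
    by (rule continuous_on_coordinatewise_then_product) (intro continuous_intros)
  then have "continuous_on (std_sphere n) ?R"
    unfolding perturbed_root_def
    by (intro continuous_on_coordinatewise_then_product[rule_format] continuous_intros)
  then show "continuous_on (std_sphere n) (\<lambda>x. sphere_normalize n (?R x))"
    by (rule continuous_on_sphere_normalize) (metis sq_pos less_irrefl)
  show "(\<lambda>x. sphere_normalize n (?R x)) ` std_sphere n \<subseteq> std_sphere n"
    using sq_pos by (intro image_subsetI sphere_normalize_in_std_sphere) (metis less_irrefl)
  show "sphere_normalize n (?R x) i \<ge> 0" if "i < n" for x i
    using perturbed_root_pos[OF m A \<open>\<epsilon> > 0\<close> that, of x] sq_pos[of x] that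
    by (simp add: sphere_normalize_def)
qed

lemma perturbed_eigenpair_exists:
  assumes m: "m \<ge> 2" and n: "n \<ge> 1" and A: "nonneg_tensor m n A" and "\<epsilon> > 0"
  shows "\<exists>x\<in>std_sphere n. \<exists>\<mu>. (\<forall>i<n. x i > 0) \<and> (\<forall>i<n. tensor_apply m n A x i + \<epsilon> = \<mu> * x i ^ (m - 1))"
proof -
  let ?R = "perturbed_root m n A \<epsilon>"
  obtain x where x: "x \<in> std_sphere n" and fixed: "sphere_normalize n (?R x) = x"
    using perturbed_root_has_normalized_fixpoint[OF m n A \<open>\<epsilon> > 0\<close>] by blast
  define N where "N = sqrt (\<Sum>j<n. (?R x j)\<^sup>2)"
  have "N > 0"
    unfolding N_def using perturbed_root_sum_squares_pos[OF m n A \<open>\<epsilon> > 0\<close>] by simp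
  have x_eq: "x i = ?R x i / N" if "i < n" for i
    using fun_cong[OF fixed, of i] that by (simp add: sphere_normalize_def N_def)
  have xpos: "x i > 0" if "i < n" for i
    using x_eq[OF that] perturbed_root_pos[OF m A \<open>\<epsilon> > 0\<close> that] \<open>N > 0\<close> by simp
  have "(\<lambda>j. \<bar>x j\<bar>) = x"
  proof
    show "\<bar>x j\<bar> = x j" for j
      using xpos[of j] x by (cases "j < n") (auto simp: std_sphere_def)
  qed
  then have "tensor_apply m n A x i + \<epsilon> = N ^ (m - 1) * x i ^ (m - 1)" if "i < n" for i
    using x_eq[OF that] \<open>N > 0\<close> m tensor_apply_nonneg[OF A _ that, of x] xpos \<open>\<epsilon> > 0\<close>
    by (simp add: power_divide perturbed_root_def real_root_pow_pos2 less_imp_le)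
  with x xpos show ?thesis
    by blast
qed

lemma approx_nonneg_eigenpair_exists:
  assumes m: "m \<ge> 2" and n: "n \<ge> 1" and A: "nonneg_tensor m n A"
    and w: "\<And>i. i < n \<Longrightarrow> w i > 0" "\<And>i. i < n \<Longrightarrow> \<gamma> * w i ^ (m - 1) \<le> tensor_apply m n A w i"
    and "\<epsilon> > 0"
  shows "\<exists>x\<in>std_sphere_nonneg n. \<exists>\<mu>\<ge>\<gamma>. \<forall>i<n. tensor_apply m n A x i + \<epsilon> = \<mu> * x i ^ (m - 1)"
proof -
  obtain x \<mu> where x: "x \<in> std_sphere n" "\<And>i. i < n \<Longrightarrow> x i > 0"
    and eq: "\<And>i. i < n \<Longrightarrow> tensor_apply m n A x i + \<epsilon> = \<mu> * x i ^ (m - 1)"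
    using perturbed_eigenpair_exists[OF m n A \<open>\<epsilon> > 0\<close>] by blast
  have "tensor_apply m n A x i < \<mu> * x i ^ (m - 1)" if "i < n" for i
    using eq[OF that] \<open>\<epsilon> > 0\<close> by linarith
  with m have "\<gamma> < \<mu>"
    by (intro collatz_wielandt_less[OF A _ n w x(2)]) auto
  moreover have "x j \<ge> 0" for j
    using x by (cases "j < n") (auto simp: std_sphere_def less_imp_le)
  then have "x \<in> std_sphere_nonneg n"
    using x(1) unfolding std_sphere_nonneg_def by blast
  ultimately show ?thesis
    using eq by (meson less_imp_le)
qed

text \<open>Measures how far x is from being an eigenvector with eigenvalue at least \<gamma>.
  Minimizing it over the compact set of nonnegative unit vectors replaces a limit argument
  for the approximate eigenvectors as \<epsilon> \<rightarrow> 0.\<close>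
definition eig_defect :: "nat \<Rightarrow> nat \<Rightarrow> tensor \<Rightarrow> real \<Rightarrow> (nat \<Rightarrow> real) \<Rightarrow> real" where
  "eig_defect m n A \<gamma> x =
     (\<Sum>i<n. \<Sum>j<n. \<bar>tensor_apply m n A x i * x j ^ (m - 1) - tensor_apply m n A x j * x i ^ (m - 1)\<bar>)
     + (\<Sum>i<n. max 0 (\<gamma> * x i ^ (m - 1) - tensor_apply m n A x i))"

lemma eig_defect_nonneg: "eig_defect m n A \<gamma> x \<ge> 0"
  unfolding eig_defect_def by (intro add_nonneg_nonneg sum_nonneg) auto

lemma continuous_on_eig_defect: "continuous_on S (eig_defect m n A \<gamma>)"
proof -
  have "continuous_on S (\<lambda>x. tensor_apply m n A x i)" for i
    using continuous_on_tensor_apply[OF continuous_on_id] by simp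
  then show ?thesis
    unfolding eig_defect_def by (intro continuous_intros)
qed

lemma eig_defect_le:
  assumes x: "x \<in> std_sphere_nonneg n" and "\<mu> \<ge> \<gamma>" and "\<epsilon> > 0"
    and eq: "\<And>i. i < n \<Longrightarrow> tensor_apply m n A x i + \<epsilon> = \<mu> * x i ^ (m - 1)"
  shows "eig_defect m n A \<gamma> x \<le> real (n * n + n) * \<epsilon>"
proof -
  have pow01: "0 \<le> x i ^ (m - 1) \<and> x i ^ (m - 1) \<le> 1" for i
    using x std_sphere_abs_le_1[of x n i] unfolding std_sphere_nonneg_def by (auto simp: power_le_one)
  have "\<bar>tensor_apply m n A x i * x j ^ (m - 1) - tensor_apply m n A x j * x i ^ (m - 1)\<bar> \<le> \<epsilon>"
    if "i < n" "j < n" for i j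
  proof -
    have Ti: "tensor_apply m n A x i = \<mu> * x i ^ (m - 1) - \<epsilon>"
      and Tj: "tensor_apply m n A x j = \<mu> * x j ^ (m - 1) - \<epsilon>"
      using eq that by (simp_all add: eq_diff_eq)
    have "tensor_apply m n A x i * x j ^ (m - 1) - tensor_apply m n A x j * x i ^ (m - 1)
        = \<epsilon> * (x i ^ (m - 1) - x j ^ (m - 1))"
      unfolding Ti Tj by (simp add: algebra_simps)
    also have "\<bar>\<dots>\<bar> \<le> \<epsilon>"
      using pow01[of i] pow01[of j] \<open>\<epsilon> > 0\<close> by (simp add: abs_mult abs_le_iff)
    finally show ?thesis .
  qed
  then have "(\<Sum>i<n. \<Sum>j<n. \<bar>tensor_apply m n A x i * x j ^ (m - 1) - tensor_apply m n A x j * x i ^ (m - 1)\<bar>)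
      \<le> real n * (real n * \<epsilon>)"
    by (intro sum_bounded_above[where A = "{..<n}", simplified]) auto
  moreover have "max 0 (\<gamma> * x i ^ (m - 1) - tensor_apply m n A x i) \<le> \<epsilon>" if "i < n" for i
    using eq[OF that] pow01[of i] \<open>\<mu> \<ge> \<gamma>\<close> \<open>\<epsilon> > 0\<close> mult_right_mono[of \<gamma> \<mu> "x i ^ (m - 1)"] by auto
  then have "(\<Sum>i<n. max 0 (\<gamma> * x i ^ (m - 1) - tensor_apply m n A x i)) \<le> real n * \<epsilon>"
    by (intro sum_bounded_above[where A = "{..<n}", simplified]) auto
  ultimately show ?thesis
    unfolding eig_defect_def by (simp add: algebra_simps)
qed

lemma eigenpair_of_eig_defect_eq_0:
  assumes x: "x \<in> std_sphere_nonneg n" and "eig_defect m n A \<gamma> x = 0"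
  shows "\<exists>\<mu>\<ge>\<gamma>. \<forall>i<n. tensor_apply m n A x i = \<mu> * x i ^ (m - 1)"
proof -
  have cross: "tensor_apply m n A x i * x j ^ (m - 1) = tensor_apply m n A x j * x i ^ (m - 1)"
    and no_deficit: "max 0 (\<gamma> * x i ^ (m - 1) - tensor_apply m n A x i) = 0" if "i < n" "j < n" for i j
    using assms(2) that unfolding eig_defect_def
    by (simp_all add: add_nonneg_eq_0_iff sum_nonneg sum_nonneg_eq_0_iff)
  have lower: "\<gamma> * x i ^ (m - 1) \<le> tensor_apply m n A x i" if "i < n" for i
    using no_deficit[OF that that] by (simp add: max_def split: if_splits)
  obtain k where k: "k < n" "x k \<noteq> 0"
    using std_sphere_nonzero x unfolding std_sphere_nonneg_def by blast
  moreover have "x k \<ge> 0"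
    using x unfolding std_sphere_nonneg_def by blast
  ultimately have "x k > 0"
    by simp
  then have pos: "x k ^ (m - 1) > 0"
    by simp
  define \<mu> where "\<mu> = tensor_apply m n A x k / x k ^ (m - 1)"
  have "\<mu> \<ge> \<gamma>"
    unfolding \<mu>_def using lower[OF k(1)] pos by (simp add: pos_le_divide_eq)
  moreover have "tensor_apply m n A x i = \<mu> * x i ^ (m - 1)" if "i < n" for i
    using cross[OF that k(1)] pos \<open>x k > 0\<close> unfolding \<mu>_def by (simp add: eq_divide_eq)
  ultimately show ?thesis
    by blast
qed

lemma nonneg_eigenpair_exists:
  assumes m: "m \<ge> 2" and n: "n \<ge> 1" and A: "nonneg_tensor m n A"
    and w: "\<And>i. i < n \<Longrightarrow> w i > 0" "\<And>i. i < n \<Longrightarrow> \<gamma> * w i ^ (m - 1) \<le> tensor_apply m n A w i"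
  shows "\<exists>x \<mu>. (\<forall>i<n. x i \<ge> 0) \<and> (\<exists>i<n. x i \<noteq> 0) \<and> \<mu> \<ge> \<gamma> \<and>
               (\<forall>i<n. tensor_apply m n A x i = \<mu> * x i ^ (m - 1))"
proof -
  let ?K = "std_sphere_nonneg n" and ?C = "real (n * n + n)"
  have approx: "\<exists>y\<in>?K. eig_defect m n A \<gamma> y \<le> ?C * \<epsilon>" if "\<epsilon> > 0" for \<epsilon>
    using approx_nonneg_eigenpair_exists[OF m n A w that] eig_defect_le that by meson
  obtain x where x: "x \<in> ?K" and xmin: "\<And>y. y \<in> ?K \<Longrightarrow> eig_defect m n A \<gamma> x \<le> eig_defect m n A \<gamma> y"
    using continuous_attains_inf[OF compact_std_sphere_nonneg _ continuous_on_eig_defect] approx[of 1]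
    by fastforce
  have bound: "eig_defect m n A \<gamma> x \<le> ?C * \<epsilon>" if "\<epsilon> > 0" for \<epsilon>
    using approx[OF that] xmin by (meson order_trans)
  have "eig_defect m n A \<gamma> x \<le> 0"
  proof (rule field_le_epsilon)
    fix e :: real
    assume "e > 0"
    moreover have "?C > 0"
      using n by (intro of_nat_0_less_iff[THEN iffD2]) simp
    ultimately show "eig_defect m n A \<gamma> x \<le> 0 + e"
      using bound[of "e / ?C"] by simp
  qed
  then have "eig_defect m n A \<gamma> x = 0"
    using eig_defect_nonneg by (rule order_antisym)
  then obtain \<mu> where "\<mu> \<ge> \<gamma>" "\<forall>i<n. tensor_apply m n A x i = \<mu> * x i ^ (m - 1)"
    using eigenpair_of_eig_defect_eq_0[OF x] by blast
  moreover have "\<forall>i<n. x i \<ge> 0" "\<exists>i<n. x i \<noteq> 0"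
    using x std_sphere_nonzero unfolding std_sphere_nonneg_def by auto
  ultimately show ?thesis
    by blast
qed

section \<open>Weak irreducibility and the spectral radius\<close>

lemma rtrancl_enters_set:
  assumes "(u, v) \<in> R\<^sup>*" and "u \<notin> S" and "v \<in> S"
  shows "\<exists>a b. (a, b) \<in> R \<and> a \<notin> S \<and> b \<in> S"
  using assms by (induction rule: rtrancl_induct) blast+

lemma exists_increment_keeping_less:
  fixes c P \<gamma> :: real
  assumes "\<gamma> * c ^ k < P"
  shows "\<exists>\<eta>>0. \<gamma> * (c + \<eta>) ^ k < P"
proof -
  have "((\<lambda>\<eta>. \<gamma> * (c + \<eta>) ^ k) \<longlongrightarrow> \<gamma> * (c + 0) ^ k) (at_right 0)"
    by (intro tendsto_intros)
  then have "eventually (\<lambda>\<eta>. \<gamma> * (c + \<eta>) ^ k < P) (at_right 0)"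
    using assms by (intro order_tendstoD(2)) auto
  then obtain b where "b > 0" "\<forall>\<eta>>0. \<eta> < b \<longrightarrow> \<gamma> * (c + \<eta>) ^ k < P"
    unfolding eventually_at_right_field by auto
  then show ?thesis
    by (intro exI[of _ "b / 2"]) auto
qed

text \<open>Raising w at the head b of an arc a \<rightarrow> b keeps the inequality strict at b
  (for a small enough increase) and makes it strict at a.\<close>
lemma supersolution_extend_strict:
  assumes m: "m \<ge> 1" and A: "nonneg_tensor m n A"
    and w: "\<forall>i<n. w i > 0" "\<forall>i<n. \<gamma> * w i ^ (m - 1) \<le> tensor_apply m n A w i"
    and strict: "\<forall>i\<in>S. \<gamma> * w i ^ (m - 1) < tensor_apply m n A w i" and "S \<subseteq> {..<n}"
    and ab: "(a, b) \<in> arcs m n A" "a \<notin> S" "b \<in> S"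
  shows "\<exists>w'. (\<forall>i<n. w' i > 0) \<and> (\<forall>i<n. \<gamma> * w' i ^ (m - 1) \<le> tensor_apply m n A w' i)
              \<and> (\<forall>i\<in>insert a S. \<gamma> * w' i ^ (m - 1) < tensor_apply m n A w' i)"
proof -
  obtain ks where a: "a < n" and ks: "ks \<in> idx (m - 1) n" "A (a # ks) \<noteq> 0" "b \<in> set ks"
    using ab(1) unfolding arcs_def by auto
  obtain \<eta> where "\<eta> > 0" and \<eta>: "\<gamma> * (w b + \<eta>) ^ (m - 1) < tensor_apply m n A w b"
    using exists_increment_keeping_less strict ab(3) by blast
  define w' where "w' = w(b := w b + \<eta>)"
  have le: "0 < w j \<and> w j \<le> w' j" if "j < n" for j
    using w(1) \<open>\<eta> > 0\<close> that unfolding w'_def by auto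
  then have w'_pos: "\<forall>i<n. w' i > 0"
    by (meson less_le_trans)
  have mono: "tensor_apply m n A w i \<le> tensor_apply m n A w' i" if "i < n" for i
    using le by (intro tensor_apply_mono[OF A m that]) (simp add: less_imp_le)
  have "tensor_apply m n A w a < tensor_apply m n A w' a"
    using le \<open>\<eta> > 0\<close> by (intro tensor_apply_strict_mono[OF A m a _ ks]) (auto simp: w'_def)
  then have "\<gamma> * w' a ^ (m - 1) < tensor_apply m n A w' a"
    using w(2) a ab by (auto simp: w'_def)
  moreover have "\<gamma> * w' i ^ (m - 1) \<le> tensor_apply m n A w' i" if "i < n" for i
    using w(2) mono[OF that] \<eta> that by (cases "i = b") (auto simp: w'_def)
  moreover have "\<gamma> * w' i ^ (m - 1) < tensor_apply m n A w' i" if "i \<in> S" for i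
    using strict mono \<eta> \<open>S \<subseteq> {..<n}\<close> that by (cases "i = b") (force simp: w'_def)+
  ultimately show ?thesis
    using w'_pos by blast
qed

lemma strict_supersolution_exists:
  assumes m: "m \<ge> 1" and A: "nonneg_tensor m n A" and irr: "weakly_irreducible m n A"
    and "\<forall>i<n. w i > 0" and "\<forall>i<n. \<gamma> * w i ^ (m - 1) \<le> tensor_apply m n A w i"
    and "S \<subseteq> {..<n}" and "S \<noteq> {}" and "\<forall>i\<in>S. \<gamma> * w i ^ (m - 1) < tensor_apply m n A w i"
  shows "\<exists>w'. (\<forall>i<n. w' i > 0) \<and> (\<forall>i<n. \<gamma> * w' i ^ (m - 1) < tensor_apply m n A w' i)"
  using assms(4-)
proof (induction "card ({..<n} - S)" arbitrary: S w rule: less_induct)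
  case less
  show ?case
  proof (cases "S = {..<n}")
    case True
    with less.prems show ?thesis
      by auto
  next
    case False
    with less.prems obtain a0 b0 where "a0 < n" "a0 \<notin> S" "b0 \<in> S"
      by blast
    moreover from this less.prems(3) have "(a0, b0) \<in> (arcs m n A)\<^sup>*"
      using irr unfolding weakly_irreducible_def by blast
    ultimately obtain a b where ab: "(a, b) \<in> arcs m n A" "a \<notin> S" "b \<in> S"
      using rtrancl_enters_set by metis
    then have "a < n"
      unfolding arcs_def by auto
    obtain w' where w': "\<forall>i<n. w' i > 0" "\<forall>i<n. \<gamma> * w' i ^ (m - 1) \<le> tensor_apply m n A w' i"
      "\<forall>i\<in>insert a S. \<gamma> * w' i ^ (m - 1) < tensor_apply m n A w' i"
      using supersolution_extend_strict[OF m A less.prems(1,2,5,3) ab] by blast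
    have card_less: "card ({..<n} - insert a S) < card ({..<n} - S)"
      using \<open>a < n\<close> \<open>a \<notin> S\<close> by (intro psubset_card_mono) auto
    have "insert a S \<subseteq> {..<n}"
      using \<open>a < n\<close> less.prems(3) by simp
    from less.hyps[OF card_less w'(1,2) this insert_not_empty w'(3)] show ?thesis .
  qed
qed

lemma norm_tmult_le:
  "cmod (tmult m n A y i) \<le> (\<Sum>js\<in>idx (m - 1) n. \<bar>A (i # js)\<bar> * (\<Prod>t<m - 1. cmod (y (js ! t))))"
  unfolding tmult_def by (rule order_trans[OF norm_sum]) (simp add: norm_mult prod_norm)

lemma norm_tmult_le_tensor_apply:
  assumes "nonneg_tensor m n A" and "m \<ge> 1" and "i < n"
  shows "cmod (tmult m n A y i) \<le> tensor_apply m n A (\<lambda>j. cmod (y j)) i"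
  using norm_tmult_le[of m n A y i] nonneg_tensor_entry[OF assms]
  by (simp add: tensor_apply_def)

lemma norm_eigenvalue_le:
  assumes "is_eigenpair m n A lam x"
  shows "cmod lam \<le> (\<Sum>i<n. \<Sum>js\<in>idx (m - 1) n. \<bar>A (i # js)\<bar>)"
proof -
  obtain i0 where i0: "i0 < n" "x i0 \<noteq> 0"
    using assms unfolding is_eigenpair_def by auto
  define M where "M = Max ((\<lambda>i. cmod (x i)) ` {..<n})"
  have fin: "finite ((\<lambda>i. cmod (x i)) ` {..<n})" "(\<lambda>i. cmod (x i)) ` {..<n} \<noteq> {}"
    using i0 by auto
  obtain i where i: "i < n" "cmod (x i) = M"
    using Max_in[OF fin] unfolding M_def by auto
  have le_M: "cmod (x j) \<le> M" if "j < n" for j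
    unfolding M_def using fin that by auto
  have "M > 0"
    using le_M[OF i0(1)] i0(2) by (meson less_le_trans zero_less_norm_iff)
  have "cmod lam * M ^ (m - 1) = cmod (tmult m n A x i)"
    using assms i unfolding is_eigenpair_def by (simp add: norm_mult norm_power)
  also have "\<dots> \<le> (\<Sum>js\<in>idx (m - 1) n. \<bar>A (i # js)\<bar> * M ^ (m - 1))"
    using le_M nth_in_idx
    by (intro order_trans[OF norm_tmult_le] sum_mono mult_left_mono)
       (auto intro: order_trans[OF prod_mono[where g = "\<lambda>_. M"]])
  also have "\<dots> = (\<Sum>js\<in>idx (m - 1) n. \<bar>A (i # js)\<bar>) * M ^ (m - 1)"
    by (simp add: sum_distrib_right)
  finally have "cmod lam \<le> (\<Sum>js\<in>idx (m - 1) n. \<bar>A (i # js)\<bar>)"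
    using \<open>M > 0\<close> by simp
  also have "\<dots> \<le> (\<Sum>i<n. \<Sum>js\<in>idx (m - 1) n. \<bar>A (i # js)\<bar>)"
    using i by (intro member_le_sum) (auto intro: sum_nonneg)
  finally show ?thesis .
qed

lemma norm_eigenvalue_le_spectral_radius:
  assumes "is_eigenpair m n A lam x"
  shows "cmod lam \<le> spectral_radius m n A"
  unfolding spectral_radius_def
proof (rule cSup_upper)
  show "cmod lam \<in> cmod ` tensor_eigenvalues m n A"
    using assms unfolding tensor_eigenvalues_def by auto
  show "bdd_above (cmod ` tensor_eigenvalues m n A)"
    using norm_eigenvalue_le unfolding tensor_eigenvalues_def by (fast intro: bdd_aboveI2)
qed

lemma supersolution_le_spectral_radius:
  assumes m: "m \<ge> 2" and n: "n \<ge> 1" and A: "nonneg_tensor m n A"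
    and w: "\<And>i. i < n \<Longrightarrow> w i > 0" "\<And>i. i < n \<Longrightarrow> \<gamma> * w i ^ (m - 1) \<le> tensor_apply m n A w i"
  shows "\<gamma> \<le> spectral_radius m n A"
proof -
  obtain x \<mu> where x: "\<exists>i<n. x i \<noteq> 0" "\<mu> \<ge> \<gamma>" "\<forall>i<n. tensor_apply m n A x i = \<mu> * x i ^ (m - 1)"
    using nonneg_eigenpair_exists[OF m n A w] by blast
  then have "is_eigenpair m n A (of_real \<mu>) (\<lambda>i. of_real (x i))"
    unfolding is_eigenpair_def tmult_of_real by simp
  then have "cmod (of_real \<mu>) \<le> spectral_radius m n A"
    by (rule norm_eigenvalue_le_spectral_radius)
  with x(2) show ?thesis
    by simp
qed

lemma strict_supersolution_less_spectral_radius: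
  assumes m: "m \<ge> 2" and n: "n \<ge> 1" and A: "nonneg_tensor m n A"
    and w: "\<And>i. i < n \<Longrightarrow> w i > 0" "\<And>i. i < n \<Longrightarrow> \<gamma> * w i ^ (m - 1) < tensor_apply m n A w i"
  shows "\<gamma> < spectral_radius m n A"
proof -
  define g where "g = Min ((\<lambda>i. tensor_apply m n A w i / w i ^ (m - 1)) ` {..<n})"
  have fin: "finite ((\<lambda>i. tensor_apply m n A w i / w i ^ (m - 1)) ` {..<n})"
    "(\<lambda>i. tensor_apply m n A w i / w i ^ (m - 1)) ` {..<n} \<noteq> {}"
    using n by (auto simp: lessThan_empty_iff)
  obtain k where "k < n" "g = tensor_apply m n A w k / w k ^ (m - 1)"
    using Min_in[OF fin] unfolding g_def by auto
  then have "\<gamma> < g"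
    using w by (simp add: pos_less_divide_eq)
  moreover have "g * w i ^ (m - 1) \<le> tensor_apply m n A w i" if "i < n" for i
  proof -
    have "g \<le> tensor_apply m n A w i / w i ^ (m - 1)"
      unfolding g_def using fin(1) that by (intro Min_le) auto
    then show ?thesis
      using w(1)[OF that] by (simp add: pos_le_divide_eq)
  qed
  then have "g \<le> spectral_radius m n A"
    using supersolution_le_spectral_radius[OF m n A, of w g] w(1) by blast
  ultimately show ?thesis
    by simp
qed

section \<open>Phases of eigenvectors of maximal modulus\<close>

lemma norm_eigenvector_is_eigenvector:
  assumes m: "m \<ge> 2" and n: "n \<ge> 1" and A: "nonneg_tensor m n A" and irr: "weakly_irreducible m n A"
    and eig: "is_eigenpair m n A lam y" and rho: "cmod lam = spectral_radius m n A"
    and nz: "\<And>i. i < n \<Longrightarrow> y i \<noteq> 0" and "i < n"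
  shows "tensor_apply m n A (\<lambda>j. cmod (y j)) i = cmod lam * cmod (y i) ^ (m - 1)"
proof (rule ccontr)
  let ?z = "\<lambda>j. cmod (y j)"
  have ge: "cmod lam * ?z j ^ (m - 1) \<le> tensor_apply m n A ?z j" if "j < n" for j
  proof -
    have "cmod lam * ?z j ^ (m - 1) = cmod (tmult m n A y j)"
      using eig that unfolding is_eigenpair_def by (simp add: norm_mult norm_power)
    also have "\<dots> \<le> tensor_apply m n A ?z j"
      using m that by (intro norm_tmult_le_tensor_apply[OF A]) auto
    finally show ?thesis .
  qed
  assume "tensor_apply m n A ?z i \<noteq> cmod lam * ?z i ^ (m - 1)"
  with ge[OF \<open>i < n\<close>] have "cmod lam * ?z i ^ (m - 1) < tensor_apply m n A ?z i"
    by linarith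
  then obtain w where "\<forall>j<n. w j > 0" "\<forall>j<n. cmod lam * w j ^ (m - 1) < tensor_apply m n A w j"
    using strict_supersolution_exists[OF _ A irr, of ?z "cmod lam" "{i}"] m ge nz \<open>i < n\<close> by auto
  then have "cmod lam < spectral_radius m n A"
    using strict_supersolution_less_spectral_radius[OF m n A, of w "cmod lam"] by blast
  with rho show False
    by simp
qed

lemma sgn_prod: "sgn (\<Prod>k\<in>K. f k) = (\<Prod>k\<in>K. sgn (f k :: 'a::real_normed_field))"
  by (induction K rule: infinite_finite_induct) (auto simp: Real_Vector_Spaces.sgn_mult)

lemma sgn_power: "sgn (z ^ k) = sgn (z :: 'a::real_normed_field) ^ k"
  by (induction k) (auto simp: Real_Vector_Spaces.sgn_mult)

lemma cnj_sgn_mult_self: "cnj (sgn z) * z = of_real (cmod z)"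
proof (cases "z = 0")
  case False
  have "cnj (sgn z) * z = cnj z * z / of_real (cmod z)"
    by (simp add: sgn_eq)
  also have "\<dots> = of_real (cmod z ^ 2) / of_real (cmod z)"
    by (simp only: complex_norm_square mult.commute)
  also have "\<dots> = of_real (cmod z)"
    using False by (simp add: power2_eq_square)
  finally show ?thesis .
qed simp

lemma complex_eq_of_real_norm_if_Re_eq_norm: "Re z = cmod z \<Longrightarrow> z = of_real (cmod z)"
  using cmod_power2[of z] by (simp add: complex_eq_iff power2_eq_square)

text \<open>Equality in the triangle inequality: rotating by the conjugate phase of the sum
  makes all real parts equal to the moduli.\<close>
lemma sgn_eq_sgn_sum_if_norm_sum_eq:
  fixes W :: "'a \<Rightarrow> complex"
  assumes fin: "finite I" and eq: "cmod (sum W I) = (\<Sum>j\<in>I. cmod (W j))"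
    and "k \<in> I" and "W k \<noteq> 0"
  shows "sgn (W k) = sgn (sum W I)"
proof -
  let ?S = "sum W I"
  have "cmod (W k) \<le> (\<Sum>j\<in>I. cmod (W j))"
    using fin \<open>k \<in> I\<close> by (intro member_le_sum) auto
  with \<open>W k \<noteq> 0\<close> eq have "?S \<noteq> 0"
    by auto
  define u where "u = sgn ?S"
  have norm_rot: "cmod (cnj u * W j) = cmod (W j)" for j
    using \<open>?S \<noteq> 0\<close> by (simp add: u_def norm_mult norm_sgn)
  have "(\<Sum>j\<in>I. Re (cnj u * W j)) = Re (cnj u * ?S)"
    by (simp add: sum_distrib_left)
  also have "\<dots> = cmod ?S"
    unfolding u_def cnj_sgn_mult_self by simp
  also have "\<dots> = (\<Sum>j\<in>I. cmod (cnj u * W j))"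
    using eq by (simp add: norm_rot)
  finally have "Re (cnj u * W k) = cmod (cnj u * W k)"
    by (rule sum_mono_inv) (use fin \<open>k \<in> I\<close> complex_Re_le_cmod in blast)+
  then have rot: "cnj u * W k = of_real (cmod (W k))"
    using complex_eq_of_real_norm_if_Re_eq_norm norm_rot by metis
  have "cnj u * u = 1"
    using \<open>?S \<noteq> 0\<close> complex_norm_square[of u] unfolding u_def
    by (simp add: norm_sgn mult.commute)
  then have "W k = u * of_real (cmod (W k))"
    by (metis rot mult.assoc mult.commute mult_1)
  then have "sgn (W k) = sgn u * of_real (sgn (cmod (W k)))"
    by (metis Real_Vector_Spaces.sgn_mult sgn_of_real)
  with \<open>W k \<noteq> 0\<close> show ?thesis
    by (simp add: u_def)
qed

text \<open>For an eigenvalue of maximal modulus, the triangle inequality in row i of the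
  eigen-equation is an equality, so each nonzero term has the phase of the whole row.\<close>
lemma eigenvector_phase_on_edge:
  assumes m: "m \<ge> 2" and n: "n \<ge> 1" and A: "nonneg_tensor m n A" and irr: "weakly_irreducible m n A"
    and eig: "is_eigenpair m n A lam y" and rho: "cmod lam = spectral_radius m n A"
    and nz: "\<And>i. i < n \<Longrightarrow> y i \<noteq> 0"
    and i: "i < n" and js: "js \<in> idx (m - 1) n" and "A (i # js) \<noteq> 0"
  shows "(\<Prod>t<m - 1. sgn (y (js ! t))) = sgn lam * sgn (y i) ^ (m - 1)"
proof -
  define W where "W ks = of_real (A (i # ks)) * (\<Prod>t<m - 1. y (ks ! t))" for ks
  have sum_W: "sum W (idx (m - 1) n) = lam * y i ^ (m - 1)"
    using eig i unfolding is_eigenpair_def tmult_def W_def by simp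
  have "(\<Sum>ks\<in>idx (m - 1) n. cmod (W ks)) = tensor_apply m n A (\<lambda>j. cmod (y j)) i"
    using nonneg_tensor_entry[OF A _ i] m
    by (simp add: W_def tensor_apply_def norm_mult prod_norm)
  also have "\<dots> = cmod (sum W (idx (m - 1) n))"
    unfolding sum_W using norm_eigenvector_is_eigenvector[OF m n A irr eig rho nz i]
    by (simp add: norm_mult norm_power)
  finally have eq: "cmod (sum W (idx (m - 1) n)) = (\<Sum>ks\<in>idx (m - 1) n. cmod (W ks))" ..
  have "W js \<noteq> 0"
    using \<open>A (i # js) \<noteq> 0\<close> nz nth_in_idx[OF js] by (simp add: W_def)
  have "(\<Prod>t<m - 1. sgn (y (js ! t))) = sgn (W js)"
    using nonneg_tensor_entry[OF A _ i js] m \<open>A (i # js) \<noteq> 0\<close>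
    by (simp add: W_def Real_Vector_Spaces.sgn_mult sgn_prod sgn_of_real)
  also have "\<dots> = sgn (sum W (idx (m - 1) n))"
    using finite_idx eq js \<open>W js \<noteq> 0\<close> by (rule sgn_eq_sgn_sum_if_norm_sum_eq)
  also have "\<dots> = sgn lam * sgn (y i) ^ (m - 1)"
    unfolding sum_W by (simp add: Real_Vector_Spaces.sgn_mult sgn_power)
  finally show ?thesis .
qed

lemma cis_sum: "finite K \<Longrightarrow> cis (\<Sum>k\<in>K. f k) = (\<Prod>k\<in>K. cis (f k))"
  by (induction K rule: finite_induct) (auto simp flip: cis_mult)

lemma cis_eq_cis_imp:
  assumes "cis a = cis b"
  obtains N :: int where "a = b + 2 * pi * of_int N"
proof -
  have "cis (a - b) = 1"
    using assms by (simp add: cis_divide[symmetric])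
  then have "exp (\<i> * complex_of_real (a - b)) = 1"
    by (simp add: cis_conv_exp)
  then obtain N :: int where "Im (\<i> * complex_of_real (a - b)) = of_int (2 * N) * pi"
    unfolding exp_eq_1 by blast
  then show ?thesis
    by (intro that[of N]) (simp add: algebra_simps)
qed

lemma mod_eq_of_cis_eq:
  fixes s j l m :: nat
  assumes "m > 0" and "l > 0" and "cis (2 * pi / real m * real s) = cis (2 * pi * real j / real l)"
  shows "s mod m = (m * j div l) mod m"
proof -
  obtain N :: int where "2 * pi / real m * real s = 2 * pi * real j / real l + 2 * pi * of_int N"
    using assms(3) by (rule cis_eq_cis_imp)
  then have "2 * pi * (real s / real m) = 2 * pi * (real j / real l + of_int N)"
    by (simp add: algebra_simps)
  then have "real s / real m = real j / real l + of_int N"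
    by (metis mult_left_cancel pi_neq_zero zero_neq_numeral mult_eq_0_iff)
  then have "real_of_int (int s * int l) = real_of_int (int j * int m + N * int m * int l)"
    using assms(1,2) by (simp add: field_simps)
  then have "int (m * j) = int l * (int s - N * int m)"
    by (simp only: of_int_eq_iff) (simp add: algebra_simps)
  then have "int (m * j) div int l = int s - N * int m"
    using assms(2) by simp
  then have "int (m * j div l) = int s - N * int m"
    by (simp add: zdiv_int)
  then have "int ((m * j div l) mod m) = (int s - N * int m) mod int m"
    by (simp add: zmod_int)
  also have "\<dots> = int (s mod m)"
    by (simp add: mod_diff_eq[symmetric] zmod_int)
  finally show ?thesis
    by simp
qed

lemma sum_incid_eq_sum_nth:
  assumes "e \<in> idx m n"
  shows "(\<Sum>i<n. incid m e i * \<phi> i) = (\<Sum>k<m. \<phi> (e ! k))"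
proof -
  have "(\<Sum>k<m. \<phi> (e ! k)) = (\<Sum>v<n. \<Sum>k\<in>{k\<in>{..<m}. e ! k = v}. \<phi> (e ! k))"
    using assms nth_in_idx by (intro sum.group[symmetric]) auto
  also have "\<dots> = (\<Sum>v<n. incid m e v * \<phi> v)"
    unfolding incid_def by (intro sum.cong refl) simp
  finally show ?thesis
    by simp
qed

lemma eigenvector_phase_product_on_edge:
  assumes m: "m \<ge> 2" and n: "n \<ge> 1" and A: "nonneg_tensor m n A" and irr: "weakly_irreducible m n A"
    and eig: "is_eigenpair m n A lam y" and rho: "cmod lam = spectral_radius m n A"
    and nz: "\<And>i. i < n \<Longrightarrow> y i \<noteq> 0" and roots: "\<And>i. i < n \<Longrightarrow> sgn (y i) ^ m = 1"
    and e: "e \<in> idx m n" "A e \<noteq> 0"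
  shows "(\<Prod>k<m. sgn (y (e ! k))) = sgn lam"
proof -
  obtain i js where e_eq: "e = i # js"
    using e m unfolding idx_def by (cases e) auto
  then have i: "i < n" and js: "js \<in> idx (m - 1) n"
    using e unfolding idx_def by auto
  obtain m' where m': "m = Suc m'"
    using m by (cases m) auto
  have "(\<Prod>k<m. sgn (y (e ! k))) = sgn (y i) * (\<Prod>t<m - 1. sgn (y (js ! t)))"
    unfolding m' prod.lessThan_Suc_shift by (simp add: e_eq)
  also have "\<dots> = sgn lam * sgn (y i) ^ m"
    using eigenvector_phase_on_edge[OF m n A irr eig rho nz i js] e(2) m
    by (simp add: e_eq power_eq_if)
  also have "\<dots> = sgn lam"
    using roots[OF i] by simp
  finally show ?thesis .
qed

lemma cis_power_root_of_unity:
  assumes "m > 0"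
  shows "cis (2 * pi / real m * real k) ^ m = 1"
proof -
  have "cis (2 * pi / real m * real k) ^ m = cis (2 * pi * real k)"
    using assms by (simp add: Complex.DeMoivre)
  then show ?thesis
    by simp
qed

lemma incidence_congruence_of_phase_product:
  fixes \<phi> :: "nat \<Rightarrow> nat"
  assumes "m > 0" and "l > 0" and "e \<in> idx m n" and "r \<ge> 0"
    and phase: "(\<Prod>k<m. cis (2 * pi / real m * real (\<phi> (e ! k))))
                = sgn (complex_of_real r * cis (2 * pi * real j / real l))"
  shows "(\<Sum>i<n. incid m e i * \<phi> i) mod m = (m * j div l) mod m"
proof -
  have "r \<noteq> 0"
    using phase by (auto simp: prod_zero_iff)
  with \<open>r \<ge> 0\<close> have "sgn (complex_of_real r * cis (2 * pi * real j / real l)) = cis (2 * pi * real j / real l)"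
    by (simp add: Real_Vector_Spaces.sgn_mult sgn_of_real)
  with phase have "cis (2 * pi / real m * real (\<Sum>k<m. \<phi> (e ! k))) = cis (2 * pi * real j / real l)"
    by (simp add: sum_distrib_left cis_sum)
  then have "(\<Sum>k<m. \<phi> (e ! k)) mod m = (m * j div l) mod m"
    by (rule mod_eq_of_cis_eq[OF assms(1,2)])
  then show ?thesis
    by (simp add: sum_incid_eq_sum_nth[OF assms(3)])
qed

theorem lemma3p2:
  fixes m n l j :: nat and A :: tensor and y :: "nat \<Rightarrow> complex" and \<phi> :: "nat \<Rightarrow> nat"
  assumes "m \<ge> 2" and "n \<ge> 1" and "l \<ge> 1"
    and "nonneg_tensor m n A" and "comb_symmetric m n A" and "weakly_irreducible m n A"
    and "spectral_sym m n A l"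
    and "j < l"
    and "is_eigenpair m n A (complex_of_real (spectral_radius m n A) * cis (2 * pi * real j / real l)) y"
    and "y 0 = 1"
    and "\<forall>i<n. \<phi> i < m \<and> y i / complex_of_real (cmod (y i)) = cis (2 * pi / real m * real (\<phi> i))"
  shows "\<forall>e\<in>edges m n A. (\<Sum>i<n. incid m e i * \<phi> i) mod m = (m * j div l) mod m"
proof -
  have m: "m \<ge> 2" and n: "n \<ge> 1" and A: "nonneg_tensor m n A" and irr: "weakly_irreducible m n A"
    using assms by simp_all
  define lam where "lam = complex_of_real (spectral_radius m n A) * cis (2 * pi * real j / real l)"
  have eig: "is_eigenpair m n A lam y"
    using assms(9) unfolding lam_def .
  then have "cmod lam \<le> spectral_radius m n A"
    by (rule norm_eigenvalue_le_spectral_radius)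
  then have rho: "cmod lam = spectral_radius m n A" and "spectral_radius m n A \<ge> 0"
    by (auto simp: lam_def norm_mult)
  have sgn_y: "sgn (y i) = cis (2 * pi / real m * real (\<phi> i))" if "i < n" for i
    using assms(11) that by (simp add: sgn_eq)
  \<comment> \<open>In particular y i \<noteq> 0, since y i / cmod (y i) = 0 when y i = 0.\<close>
  then have nz: "y i \<noteq> 0" if "i < n" for i
    using that by (metis cis_neq_zero sgn_zero)
  have roots: "sgn (y i) ^ m = 1" if "i < n" for i
    using sgn_y[OF that] cis_power_root_of_unity[of m "\<phi> i"] m by simp
  show ?thesis
  proof
    fix e
    assume "e \<in> edges m n A"
    then have e: "e \<in> idx m n" "A e \<noteq> 0"
      unfolding edges_def by auto
    have "(\<Prod>k<m. cis (2 * pi / real m * real (\<phi> (e ! k)))) = (\<Prod>k<m. sgn (y (e ! k)))"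
      using sgn_y nth_in_idx[OF e(1)] by simp
    also have "\<dots> = sgn lam"
      by (rule eigenvector_phase_product_on_edge[OF m n A irr eig rho nz roots e])
    finally show "(\<Sum>i<n. incid m e i * \<phi> i) mod m = (m * j div l) mod m"
      using m assms(3) e(1) \<open>spectral_radius m n A \<ge> 0\<close> unfolding lam_def
      by (intro incidence_congruence_of_phase_product) auto
  qed
qed

end
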